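(* Let $A\in\mathrm{GL}_{n}(\mathbb{Z})$ be diagonalizable over $\mathbb{C}$ and have no eigenvalue of absolute value $1$. Then every length function $l$ on $G=\mathbb{Z}^{n}\rtimes_{A}\mathbb{Z}$ vanishes on $\mathbb{Z}^{n}$.
   Context: $\mathbb{Z}^{n}\rtimes_{A}\mathbb{Z}$ is the semidirect product in which a generator of $\mathbb{Z}$ acts on $\mathbb{Z}^n$ by $A$. A length function on a group $G$ is a function $l:G\to[0,\infty)$ such that $l(g^{n})=|n|\,l(g)$ for all $g\in G,n\in\mathbb{Z}$; $l(hgh^{-1})=l(g)$ for all $g,h$; and $l(ab)\leq l(a)+l(b)$ whenever $a,b$ commute. *)

theory Defs
  imports "Jordan_Normal_Form.Matrix" "Jordan_Normal_Form.Char_Poly" "HOL-Algebra.Group"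
begin

definition inv_mat_int :: "int mat \<Rightarrow> int mat" where
  "inv_mat_int A = (SOME B. B \<in> carrier_mat (dim_row A) (dim_row A) \<and> inverts_mat A B \<and> inverts_mat B A)"

definition mat_int_pow :: "int mat \<Rightarrow> int \<Rightarrow> int mat" where
  "mat_int_pow A k = (if 0 \<le> k then A ^\<^sub>m nat k else (inv_mat_int A) ^\<^sub>m nat (- k))"

definition sdp_group :: "nat \<Rightarrow> int mat \<Rightarrow> (int vec \<times> int) monoid" where
  "sdp_group n A = \<lparr> carrier = carrier_vec n \<times> UNIV,
     mult = (\<lambda>(v,k) (w,m). (v + mat_int_pow A k *\<^sub>v w, k + m)),
     one = (0\<^sub>v n, 0) \<rparr>"

definition length_function :: "('a, 'b) monoid_scheme \<Rightarrow> ('a \<Rightarrow> real) \<Rightarrow> bool" where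
  "length_function G l \<longleftrightarrow>
     (\<forall>g\<in>carrier G. 0 \<le> l g) \<and>
     (\<forall>g\<in>carrier G. \<forall>m::int. l (g [^]\<^bsub>G\<^esub> m) = \<bar>real_of_int m\<bar> * l g) \<and>
     (\<forall>g\<in>carrier G. \<forall>h\<in>carrier G. l (h \<otimes>\<^bsub>G\<^esub> g \<otimes>\<^bsub>G\<^esub> inv\<^bsub>G\<^esub> h) = l g) \<and>
     (\<forall>a\<in>carrier G. \<forall>b\<in>carrier G. a \<otimes>\<^bsub>G\<^esub> b = b \<otimes>\<^bsub>G\<^esub> a \<longrightarrow>
        l (a \<otimes>\<^bsub>G\<^esub> b) \<le> l a + l b)"

end

theory Submission
  imports Defs
begin

(* On the translation subgroup Z^n a length function l restricts to f w = l (w, 0), which is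
   nonnegative, homogeneous under nonnegative integer scaling and subadditive (Z^n is abelian),
   hence bounded by C |w|_1. Since conjugation by the generator of Z acts as A, f is invariant
   under A and A^-1. Diagonalizing A over C, every v in Z^n splits as v = s + u with real s, u
   such that A^k s -> 0 and A^-k u -> 0. Rounding N s to a lattice point w1 and putting
   w2 = N v - w1 gives
     N f v <= f (A^k w1) + f (A^-k w2) <= C (N (|A^k s|_1 + |A^-k u|_1) + c_k),
   so f v <= C (|A^k s|_1 + |A^-k u|_1) for every k, and f v = 0 in the limit. *)

definition norm1_vec :: "'a::real_normed_vector vec \<Rightarrow> real" where
  "norm1_vec x = (\<Sum>i<dim_vec x. norm (x $ i))"

definition norm1_mat :: "'a::real_normed_vector mat \<Rightarrow> real" where
  "norm1_mat M = (\<Sum>i<dim_row M. \<Sum>j<dim_col M. norm (M $$ (i, j)))"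

lemma norm1_vec_nonneg: "0 \<le> norm1_vec x"
  unfolding norm1_vec_def by (simp add: sum_nonneg)

lemma norm1_vec_add:
  "x \<in> carrier_vec n \<Longrightarrow> y \<in> carrier_vec n \<Longrightarrow> norm1_vec (x + y) \<le> norm1_vec x + norm1_vec y"
  unfolding norm1_vec_def by (auto simp: sum.distrib[symmetric] intro!: sum_mono norm_triangle_ineq)

lemma norm1_vec_smult:
  "norm1_vec (c \<cdot>\<^sub>v x) = norm c * norm1_vec (x :: 'a::real_normed_div_algebra vec)"
  unfolding norm1_vec_def by (simp add: sum_distrib_left norm_mult)

lemma norm_le_norm1_vec: "i < dim_vec x \<Longrightarrow> norm (x $ i) \<le> norm1_vec x"
  unfolding norm1_vec_def by (rule member_le_sum) auto

lemma norm1_vec_map_Re: "norm1_vec (map_vec Re x) \<le> norm1_vec x"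
  unfolding norm1_vec_def by (auto intro!: sum_mono abs_Re_le_cmod)

lemma norm1_mult_mat_vec_le:
  fixes M :: "'a::real_normed_algebra mat"
  assumes M: "M \<in> carrier_mat m n" and x: "x \<in> carrier_vec n"
    and x_le: "\<And>j. j < n \<Longrightarrow> norm (x $ j) \<le> b"
  shows "norm1_vec (M *\<^sub>v x) \<le> norm1_mat M * b"
proof -
  have entry_le: "norm (M $$ (i, j) * x $ j) \<le> norm (M $$ (i, j)) * b" if "j < n" for i j
    using norm_mult_ineq order.trans mult_left_mono[OF x_le[OF that] norm_ge_zero] by blast
  have "norm1_vec (M *\<^sub>v x) = (\<Sum>i<m. norm (\<Sum>j<n. M $$ (i, j) * x $ j))"
    using M x unfolding norm1_vec_def
    by (auto simp: mult_mat_vec_def scalar_prod_def atLeast0LessThan intro!: sum.cong)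
  also have "\<dots> \<le> (\<Sum>i<m. \<Sum>j<n. norm (M $$ (i, j)) * b)"
    by (intro sum_mono order.trans[OF norm_sum]) (simp add: entry_le)
  also have "\<dots> = norm1_mat M * b"
    using M unfolding norm1_mat_def by (simp add: sum_distrib_right)
  finally show ?thesis .
qed

lemma norm1_mult_mat_vec_le_norm1:
  fixes M :: "'a::real_normed_algebra mat"
  assumes "M \<in> carrier_mat m n" and "x \<in> carrier_vec n"
  shows "norm1_vec (M *\<^sub>v x) \<le> norm1_mat M * norm1_vec x"
  using assms by (intro norm1_mult_mat_vec_le norm_le_norm1_vec) auto

lemma norm1_mult_mat_vec_perturbed:
  fixes R :: "'a::real_normed_field mat"
  assumes R: "R \<in> carrier_mat m n" and t: "t \<in> carrier_vec n" and e: "e \<in> carrier_vec n"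
    and e_le: "\<And>i. i < n \<Longrightarrow> norm (e $ i) \<le> 1"
  shows "norm1_vec (R *\<^sub>v (c \<cdot>\<^sub>v t + e)) \<le> norm c * norm1_vec (R *\<^sub>v t) + norm1_mat R"
proof -
  have "R *\<^sub>v (c \<cdot>\<^sub>v t + e) = c \<cdot>\<^sub>v (R *\<^sub>v t) + R *\<^sub>v e"
    using R t e by (simp add: mult_add_distrib_mat_vec mult_mat_vec)
  then have "norm1_vec (R *\<^sub>v (c \<cdot>\<^sub>v t + e)) \<le> norm1_vec (c \<cdot>\<^sub>v (R *\<^sub>v t)) + norm1_vec (R *\<^sub>v e)"
    using R t e by (simp add: norm1_vec_add[of _ m])
  also have "\<dots> \<le> norm c * norm1_vec (R *\<^sub>v t) + norm1_mat R"
    using norm1_mult_mat_vec_le[OF R e e_le] by (simp add: norm1_vec_smult)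
  finally show ?thesis .
qed

lemma map_vec_Re_of_int_mult_mat_vec:
  assumes M: "M \<in> carrier_mat m n" and x: "x \<in> carrier_vec n"
  shows "map_vec Re (map_mat complex_of_int M *\<^sub>v x) = map_mat real_of_int M *\<^sub>v map_vec Re x"
  using M x by (intro eq_vecI) (auto simp: mult_mat_vec_def scalar_prod_def Re_sum)

lemma tendsto_norm1_Re_of_int_mult_mat_vec:
  assumes M: "\<And>k. M k \<in> carrier_mat m n" and x: "x \<in> carrier_vec n"
    and lim: "(\<lambda>k. norm1_vec (map_mat complex_of_int (M k) *\<^sub>v x)) \<longlonglongrightarrow> 0"
  shows "(\<lambda>k. norm1_vec (map_mat real_of_int (M k) *\<^sub>v map_vec Re x)) \<longlonglongrightarrow> 0"
proof (rule tendsto_sandwich[OF _ _ tendsto_const lim])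
  show "\<forall>\<^sub>F k in sequentially. 0 \<le> norm1_vec (map_mat real_of_int (M k) *\<^sub>v map_vec Re x)"
    by (simp add: norm1_vec_nonneg)
  show "\<forall>\<^sub>F k in sequentially. norm1_vec (map_mat real_of_int (M k) *\<^sub>v map_vec Re x)
      \<le> norm1_vec (map_mat complex_of_int (M k) *\<^sub>v x)"
    by (intro always_eventually allI)
      (simp only: map_vec_Re_of_int_mult_mat_vec[OF M x, symmetric] norm1_vec_map_Re)
qed

lemma mult_mat_vec_zero [simp]: "M \<in> carrier_mat m n \<Longrightarrow> M *\<^sub>v 0\<^sub>v n = 0\<^sub>v m"
  by (intro eq_vecI) auto

lemma diagonal_mat_mult_vec:
  assumes D: "D \<in> carrier_mat n n" and diag: "diagonal_mat D" and y: "y \<in> carrier_vec n"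
  shows "D *\<^sub>v y = vec n (\<lambda>i. D $$ (i, i) * y $ i)"
proof (rule eq_vecI)
  fix i assume "i < dim_vec (vec n (\<lambda>i. D $$ (i, i) * y $ i))"
  then have i: "i < n" by simp
  have "(D *\<^sub>v y) $ i = (\<Sum>j<n. D $$ (i, j) * y $ j)"
    using D y i by (simp add: mult_mat_vec_def scalar_prod_def atLeast0LessThan)
  also have "\<dots> = (\<Sum>j<n. if j = i then D $$ (i, i) * y $ i else 0)"
    using diag D i unfolding diagonal_mat_def by (intro sum.cong) auto
  finally show "(D *\<^sub>v y) $ i = vec n (\<lambda>i. D $$ (i, i) * y $ i) $ i" using i by simp
qed (use D in simp)

lemma pow_mult_mat_vec_diagonal_action:
  fixes M P :: "'a::comm_semiring_1 mat"
  assumes M: "M \<in> carrier_mat n n" and P: "P \<in> carrier_mat n n"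
    and act: "\<And>y. y \<in> carrier_vec n \<Longrightarrow> M *\<^sub>v (P *\<^sub>v y) = P *\<^sub>v vec n (\<lambda>i. c i * y $ i)"
    and y: "y \<in> carrier_vec n"
  shows "M ^\<^sub>m k *\<^sub>v (P *\<^sub>v y) = P *\<^sub>v vec n (\<lambda>i. c i ^ k * y $ i)"
  using y
proof (induction k arbitrary: y)
  case 0
  have "vec n (\<lambda>i. c i ^ 0 * y $ i) = y" using 0 by (intro eq_vecI) auto
  then show ?case using M P 0 by simp
next
  case (Suc k)
  have "M ^\<^sub>m Suc k *\<^sub>v (P *\<^sub>v y) = M ^\<^sub>m k *\<^sub>v (M *\<^sub>v (P *\<^sub>v y))"
    using assoc_mult_mat_vec[OF pow_carrier_mat[OF M] M mult_mat_vec_carrier[OF P Suc.prems]]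
    by simp
  also have "\<dots> = P *\<^sub>v vec n (\<lambda>i. c i ^ k * vec n (\<lambda>i. c i * y $ i) $ i)"
    by (simp add: act Suc.prems Suc.IH)
  also have "vec n (\<lambda>i. c i ^ k * vec n (\<lambda>i. c i * y $ i) $ i) = vec n (\<lambda>i. c i ^ Suc k * y $ i)"
    by (intro eq_vecI) (auto simp: ac_simps)
  finally show ?case .
qed

lemma diagonal_action_eigenvalue:
  fixes M P Q :: "'a::field mat"
  assumes M: "M \<in> carrier_mat n n" and P: "P \<in> carrier_mat n n" and Q: "Q \<in> carrier_mat n n"
    and QP: "Q * P = 1\<^sub>m n"
    and act: "\<And>y. y \<in> carrier_vec n \<Longrightarrow> M *\<^sub>v (P *\<^sub>v y) = P *\<^sub>v vec n (\<lambda>i. c i * y $ i)"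
    and i: "i < n"
  shows "eigenvalue M (c i)"
proof -
  let ?v = "P *\<^sub>v unit_vec n i"
  have "Q *\<^sub>v ?v = unit_vec n i"
    using P Q QP by (simp flip: assoc_mult_mat_vec)
  then have "?v \<noteq> 0\<^sub>v n"
    using Q i by (metis index_unit_vec(1) index_zero_vec(1) mult_mat_vec_zero zero_neq_one)
  moreover have "vec n (\<lambda>j. c j * unit_vec n i $ j) = c i \<cdot>\<^sub>v unit_vec n i"
    by (intro eq_vecI) (auto simp: unit_vec_def)
  then have "M *\<^sub>v ?v = c i \<cdot>\<^sub>v ?v"
    using act[of "unit_vec n i"] P by (simp add: mult_mat_vec)
  ultimately have "eigenvector M ?v (c i)"
    unfolding eigenvector_def using M P by auto
  then show ?thesis
    unfolding eigenvalue_def by blast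
qed

lemma eigenvalue_nonzero_if_left_invertible:
  fixes M N :: "'a::comm_ring_1 mat"
  assumes M: "M \<in> carrier_mat n n" and N: "N \<in> carrier_mat n n" and NM: "N * M = 1\<^sub>m n"
    and ev: "eigenvalue M z"
  shows "z \<noteq> 0"
proof
  assume "z = 0"
  from ev obtain v where v: "v \<in> carrier_vec n" "v \<noteq> 0\<^sub>v n" and "M *\<^sub>v v = 0 \<cdot>\<^sub>v v"
    using M \<open>z = 0\<close> unfolding eigenvalue_def eigenvector_def by auto
  then have Mv: "M *\<^sub>v v = 0\<^sub>v n"
    by (intro eq_vecI) auto
  have "v = N *\<^sub>v (M *\<^sub>v v)"
    using M N NM v by (simp flip: assoc_mult_mat_vec)
  also have "\<dots> = 0\<^sub>v n"
    using N Mv by simp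
  finally show False using v by simp
qed

lemma inverse_diagonal_action:
  fixes M N P :: "'a::field mat"
  assumes M: "M \<in> carrier_mat n n" and N: "N \<in> carrier_mat n n" and P: "P \<in> carrier_mat n n"
    and NM: "N * M = 1\<^sub>m n"
    and act: "\<And>y. y \<in> carrier_vec n \<Longrightarrow> M *\<^sub>v (P *\<^sub>v y) = P *\<^sub>v vec n (\<lambda>i. c i * y $ i)"
    and nonzero: "\<And>i. i < n \<Longrightarrow> c i \<noteq> 0"
    and y: "y \<in> carrier_vec n"
  shows "N *\<^sub>v (P *\<^sub>v y) = P *\<^sub>v vec n (\<lambda>i. inverse (c i) * y $ i)"
proof -
  let ?z = "vec n (\<lambda>i. inverse (c i) * y $ i)"
  have "vec n (\<lambda>i. c i * ?z $ i) = y"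
    using nonzero y by (intro eq_vecI) auto
  then have "N *\<^sub>v (P *\<^sub>v y) = (N * M) *\<^sub>v (P *\<^sub>v ?z)"
    using act[of ?z] M N P by simp
  then show ?thesis using NM P by simp
qed

lemma tendsto_norm1_diagonal_action_zero:
  fixes P :: "'a::real_normed_field mat"
  assumes P: "P \<in> carrier_mat m n" and y: "y \<in> carrier_vec n"
    and contracting: "\<And>i. i < n \<Longrightarrow> y $ i \<noteq> 0 \<Longrightarrow> norm (c i) < 1"
  shows "(\<lambda>k. norm1_vec (P *\<^sub>v vec n (\<lambda>i. c i ^ k * y $ i))) \<longlonglongrightarrow> 0"
proof (rule tendsto_sandwich[OF _ _ tendsto_const])
  let ?bound = "\<lambda>k. norm1_mat P * (\<Sum>i<n. norm (c i) ^ k * norm (y $ i))"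
  show "\<forall>\<^sub>F k in sequentially. 0 \<le> norm1_vec (P *\<^sub>v vec n (\<lambda>i. c i ^ k * y $ i))"
    by (simp add: norm1_vec_nonneg)
  show "\<forall>\<^sub>F k in sequentially. norm1_vec (P *\<^sub>v vec n (\<lambda>i. c i ^ k * y $ i)) \<le> ?bound k"
    using norm1_mult_mat_vec_le_norm1[OF P, of "vec n (\<lambda>i. c i ^ _ * y $ i)"]
    by (simp add: always_eventually norm1_vec_def norm_mult norm_power)
  have "(\<lambda>k. norm (c i) ^ k * norm (y $ i)) \<longlonglongrightarrow> 0" if "i < n" for i
    using contracting[OF that]
    by (cases "y $ i = 0") (auto intro: tendsto_mult_left_zero LIMSEQ_power_zero)
  then show "?bound \<longlonglongrightarrow> 0"
    by (intro tendsto_mult_right_zero tendsto_null_sum) auto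
qed

lemma diagonal_similarity_action:
  fixes M :: "'a::semiring_1 mat"
  assumes M: "M \<in> carrier_mat n n" and diag: "diagonal_mat D" and sim: "similar_mat M D"
  obtains P Q where "P \<in> carrier_mat n n" "Q \<in> carrier_mat n n" "P * Q = 1\<^sub>m n" "Q * P = 1\<^sub>m n"
    "\<And>y. y \<in> carrier_vec n \<Longrightarrow> M *\<^sub>v (P *\<^sub>v y) = P *\<^sub>v vec n (\<lambda>i. D $$ (i, i) * y $ i)"
proof -
  obtain n' P Q where PQ: "{M, D, P, Q} \<subseteq> carrier_mat n' n'" "P * Q = 1\<^sub>m n'" "Q * P = 1\<^sub>m n'"
    "M = P * D * Q"
    using similar_matD[OF sim] by blast
  then have D: "D \<in> carrier_mat n n" and P: "P \<in> carrier_mat n n" and Q: "Q \<in> carrier_mat n n"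
    and PQ1: "P * Q = 1\<^sub>m n" and QP1: "Q * P = 1\<^sub>m n"
    using M by auto
  show thesis
  proof (rule that[OF P Q PQ1 QP1])
    fix y :: "'a vec" assume y: "y \<in> carrier_vec n"
    have "M *\<^sub>v (P *\<^sub>v y) = (P * D) *\<^sub>v (Q *\<^sub>v (P *\<^sub>v y))"
      unfolding PQ(4) using P D Q y by (intro assoc_mult_mat_vec) auto
    also have "\<dots> = P *\<^sub>v (D *\<^sub>v (Q *\<^sub>v (P *\<^sub>v y)))"
      using P D Q y by (intro assoc_mult_mat_vec) auto
    also have "Q *\<^sub>v (P *\<^sub>v y) = y"
      using P Q QP1 y by (simp flip: assoc_mult_mat_vec)
    finally show "M *\<^sub>v (P *\<^sub>v y) = P *\<^sub>v vec n (\<lambda>i. D $$ (i, i) * y $ i)"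
      using diagonal_mat_mult_vec[OF D diag y] by simp
  qed
qed

lemma diagonalizable_split_contracting:
  fixes M N :: "'a::real_normed_field mat"
  assumes M: "M \<in> carrier_mat n n" and N: "N \<in> carrier_mat n n" and NM: "N * M = 1\<^sub>m n"
    and diag: "diagonal_mat D" and sim: "similar_mat M D"
    and no_unit_eigenvalue: "\<And>z. eigenvalue M z \<Longrightarrow> norm z \<noteq> 1"
    and x: "x \<in> carrier_vec n"
  obtains s u where "s \<in> carrier_vec n" "u \<in> carrier_vec n" "s + u = x"
    "(\<lambda>k. norm1_vec (M ^\<^sub>m k *\<^sub>v s)) \<longlonglongrightarrow> 0" "(\<lambda>k. norm1_vec (N ^\<^sub>m k *\<^sub>v u)) \<longlonglongrightarrow> 0"
proof -
  define d where "d i = D $$ (i, i)" for i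
  obtain P Q where P: "P \<in> carrier_mat n n" and Q: "Q \<in> carrier_mat n n"
    and PQ1: "P * Q = 1\<^sub>m n" and QP1: "Q * P = 1\<^sub>m n"
    and act_M: "\<And>y. y \<in> carrier_vec n \<Longrightarrow> M *\<^sub>v (P *\<^sub>v y) = P *\<^sub>v vec n (\<lambda>i. d i * y $ i)"
    using diagonal_similarity_action[OF M diag sim] unfolding d_def by blast
  have d_eigenvalue: "eigenvalue M (d i)" if "i < n" for i
    by (rule diagonal_action_eigenvalue[OF M P Q QP1 act_M that])
  have d_nonzero: "d i \<noteq> 0" if "i < n" for i
    by (rule eigenvalue_nonzero_if_left_invertible[OF M N NM d_eigenvalue[OF that]])
  have act_N: "N *\<^sub>v (P *\<^sub>v y) = P *\<^sub>v vec n (\<lambda>i. inverse (d i) * y $ i)"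
    if "y \<in> carrier_vec n" for y
    by (rule inverse_diagonal_action[OF M N P NM act_M d_nonzero that])
  define w where "w = Q *\<^sub>v x"
  define ws where "ws = vec n (\<lambda>i. if norm (d i) < 1 then w $ i else 0)"
  define wu where "wu = vec n (\<lambda>i. if norm (d i) < 1 then 0 else w $ i)"
  have ws: "ws \<in> carrier_vec n" and wu: "wu \<in> carrier_vec n"
    unfolding ws_def wu_def by auto
  show thesis
  proof (rule that[of "P *\<^sub>v ws" "P *\<^sub>v wu"])
    have "ws + wu = Q *\<^sub>v x"
      using Q unfolding ws_def wu_def w_def by (intro eq_vecI) auto
    then show "P *\<^sub>v ws + P *\<^sub>v wu = x"
      using P Q PQ1 ws wu x by (simp flip: mult_add_distrib_mat_vec assoc_mult_mat_vec)
    have pow_ws: "M ^\<^sub>m k *\<^sub>v (P *\<^sub>v ws) = P *\<^sub>v vec n (\<lambda>i. d i ^ k * ws $ i)" for k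
      by (rule pow_mult_mat_vec_diagonal_action[OF M P act_M ws])
    have "(\<lambda>k. norm1_vec (P *\<^sub>v vec n (\<lambda>i. d i ^ k * ws $ i))) \<longlonglongrightarrow> 0"
      by (rule tendsto_norm1_diagonal_action_zero[OF P ws]) (simp add: ws_def split: if_splits)
    then show "(\<lambda>k. norm1_vec (M ^\<^sub>m k *\<^sub>v (P *\<^sub>v ws))) \<longlonglongrightarrow> 0"
      by (simp only: pow_ws)
    have pow_wu: "N ^\<^sub>m k *\<^sub>v (P *\<^sub>v wu) = P *\<^sub>v vec n (\<lambda>i. inverse (d i) ^ k * wu $ i)" for k
      by (rule pow_mult_mat_vec_diagonal_action[OF N P act_N wu])
    have "norm (inverse (d i)) < 1" if "i < n" "\<not> norm (d i) < 1" for i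
    proof -
      have "1 < norm (d i)"
        using that no_unit_eigenvalue[OF d_eigenvalue[OF that(1)]] by simp
      then show ?thesis
        by (simp add: norm_inverse inverse_less_1_iff)
    qed
    then have "(\<lambda>k. norm1_vec (P *\<^sub>v vec n (\<lambda>i. inverse (d i) ^ k * wu $ i))) \<longlonglongrightarrow> 0"
      by (intro tendsto_norm1_diagonal_action_zero[OF P wu]) (simp add: wu_def split: if_splits)
    then show "(\<lambda>k. norm1_vec (N ^\<^sub>m k *\<^sub>v (P *\<^sub>v wu))) \<longlonglongrightarrow> 0"
      by (simp only: pow_wu)
  qed (use P ws wu in auto)
qed

lemma int_mat_split_contracting:
  fixes A B :: "int mat" and x :: "real vec"
  assumes A: "A \<in> carrier_mat n n" and B: "B \<in> carrier_mat n n" and BA: "B * A = 1\<^sub>m n"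
    and diag: "diagonal_mat D" and sim: "similar_mat (map_mat complex_of_int A) D"
    and no_unit_eigenvalue: "\<And>z. eigenvalue (map_mat complex_of_int A) z \<Longrightarrow> cmod z \<noteq> 1"
    and x: "x \<in> carrier_vec n"
  obtains s u where "s \<in> carrier_vec n" "u \<in> carrier_vec n" "s + u = x"
    "(\<lambda>k. norm1_vec (map_mat real_of_int (A ^\<^sub>m k) *\<^sub>v s)) \<longlonglongrightarrow> 0"
    "(\<lambda>k. norm1_vec (map_mat real_of_int (B ^\<^sub>m k) *\<^sub>v u)) \<longlonglongrightarrow> 0"
proof -
  have A': "map_mat complex_of_int A \<in> carrier_mat n n"
    and B': "map_mat complex_of_int B \<in> carrier_mat n n"
    and x': "map_vec complex_of_real x \<in> carrier_vec n"
    using A B x by auto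
  have "map_mat complex_of_int B * map_mat complex_of_int A = 1\<^sub>m n"
    using of_int_hom.mat_hom_mult[OF B A] of_int_hom.mat_hom_one BA by metis
  then obtain s u where s: "s \<in> carrier_vec n" and u: "u \<in> carrier_vec n"
    and su: "s + u = map_vec complex_of_real x"
    and lim_s: "(\<lambda>k. norm1_vec (map_mat complex_of_int A ^\<^sub>m k *\<^sub>v s)) \<longlonglongrightarrow> 0"
    and lim_u: "(\<lambda>k. norm1_vec (map_mat complex_of_int B ^\<^sub>m k *\<^sub>v u)) \<longlonglongrightarrow> 0"
    by (rule diagonalizable_split_contracting[OF A' B' _ diag sim no_unit_eigenvalue x'])
  show thesis
  proof (rule that[of "map_vec Re s" "map_vec Re u"])
    have "s $ i + u $ i = complex_of_real (x $ i)" if "i < n" for i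
      using arg_cong[OF su, of "\<lambda>y. y $ i"] s u x that by simp
    then show "map_vec Re s + map_vec Re u = x"
      using s u x by (intro eq_vecI) (auto simp flip: plus_complex.sel(1))
    show "(\<lambda>k. norm1_vec (map_mat real_of_int (A ^\<^sub>m k) *\<^sub>v map_vec Re s)) \<longlonglongrightarrow> 0"
      using lim_s tendsto_norm1_Re_of_int_mult_mat_vec[of "\<lambda>k. A ^\<^sub>m k" n n s] A s
      by (simp add: of_int_hom.mat_hom_pow)
    show "(\<lambda>k. norm1_vec (map_mat real_of_int (B ^\<^sub>m k) *\<^sub>v map_vec Re u)) \<longlonglongrightarrow> 0"
      using lim_u tendsto_norm1_Re_of_int_mult_mat_vec[of "\<lambda>k. B ^\<^sub>m k" n n u] B u
      by (simp add: of_int_hom.mat_hom_pow)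
  qed (use s u in auto)
qed

lemma le_if_nat_mult_le_add:
  fixes x y c :: real
  assumes le: "\<And>N::nat. real N * x \<le> real N * y + c"
  shows "x \<le> y"
proof (rule ccontr)
  assume "\<not> x \<le> y"
  then have pos: "0 < x - y" by simp
  obtain N :: nat where "c / (x - y) < real N"
    using reals_Archimedean2 by blast
  then have "c < real N * (x - y)"
    using pos by (simp add: pos_divide_less_eq mult.commute)
  then show False
    using le[of N] by (simp add: algebra_simps)
qed

lemma mat_pow_invariant:
  assumes M: "M \<in> carrier_mat n n" and inv: "\<And>w. w \<in> carrier_vec n \<Longrightarrow> g (M *\<^sub>v w) = g w"
    and w: "w \<in> carrier_vec n"
  shows "g (M ^\<^sub>m k *\<^sub>v w) = g w"
  using w
proof (induction k arbitrary: w)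
  case (Suc k)
  have "M ^\<^sub>m Suc k *\<^sub>v w = M ^\<^sub>m k *\<^sub>v (M *\<^sub>v w)"
    using assoc_mult_mat_vec[OF pow_carrier_mat[OF M] M Suc.prems] by simp
  then show ?case
    using Suc.IH[of "M *\<^sub>v w"] inv[OF Suc.prems] M Suc.prems by simp
qed (use M in simp)

lemma inverse_invariant:
  fixes A B :: "'a::semiring_1 mat"
  assumes A: "A \<in> carrier_mat n n" and B: "B \<in> carrier_mat n n" and AB: "A * B = 1\<^sub>m n"
    and inv: "\<And>w. w \<in> carrier_vec n \<Longrightarrow> g (A *\<^sub>v w) = g w"
    and w: "w \<in> carrier_vec n"
  shows "g (B *\<^sub>v w) = g w"
proof -
  have "g (B *\<^sub>v w) = g (A *\<^sub>v (B *\<^sub>v w))"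
    using inv B w by simp
  also have "A *\<^sub>v (B *\<^sub>v w) = w"
    using A B AB w by (simp flip: assoc_mult_mat_vec)
  finally show ?thesis .
qed

locale homogeneous_subadditive =
  fixes n :: nat and f :: "int vec \<Rightarrow> real"
  assumes nonneg: "w \<in> carrier_vec n \<Longrightarrow> 0 \<le> f w"
    and scale: "w \<in> carrier_vec n \<Longrightarrow> f (of_nat N \<cdot>\<^sub>v w) = real N * f w"
    and subadditive: "v \<in> carrier_vec n \<Longrightarrow> w \<in> carrier_vec n \<Longrightarrow> f (v + w) \<le> f v + f w"
begin

lemma zero: "f (0\<^sub>v n) = 0"
proof -
  have "(of_nat 0 :: int) \<cdot>\<^sub>v 0\<^sub>v n = 0\<^sub>v n"
    by (intro eq_vecI) auto
  then show ?thesis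
    using scale[of "0\<^sub>v n" 0] by simp
qed

lemma smult_unit_vec_le:
  assumes i: "i < n"
  shows "f (z \<cdot>\<^sub>v unit_vec n i) \<le> \<bar>real_of_int z\<bar> * (f (unit_vec n i) + f (- unit_vec n i))"
proof -
  obtain w where w: "w = unit_vec n i \<or> w = - unit_vec n i"
    and z: "z \<cdot>\<^sub>v unit_vec n i = of_nat (nat \<bar>z\<bar>) \<cdot>\<^sub>v w"
  proof (cases "0 \<le> z")
    case True
    then show thesis
      by (intro that[of "unit_vec n i"]) auto
  next
    case False
    then show thesis
      by (intro that[of "- unit_vec n i"]) (auto intro!: eq_vecI)
  qed
  have "f (z \<cdot>\<^sub>v unit_vec n i) = \<bar>real_of_int z\<bar> * f w"
    using z w i scale[of w "nat \<bar>z\<bar>"] by auto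
  also have "\<dots> \<le> \<bar>real_of_int z\<bar> * (f (unit_vec n i) + f (- unit_vec n i))"
    using w i nonneg[of "unit_vec n i"] nonneg[of "- unit_vec n i"] by (intro mult_left_mono) auto
  finally show ?thesis .
qed

lemma truncation_le:
  assumes x: "x \<in> carrier_vec n" and j: "j \<le> n"
  shows "f (vec n (\<lambda>i. if i < j then x $ i else 0))
    \<le> (\<Sum>i<j. \<bar>real_of_int (x $ i)\<bar> * (f (unit_vec n i) + f (- unit_vec n i)))"
  using j
proof (induction j)
  case 0
  then show ?case
    using zero by (simp add: zero_vec_def)
next
  case (Suc j)
  have "vec n (\<lambda>i. if i < Suc j then x $ i else 0)
      = vec n (\<lambda>i. if i < j then x $ i else 0) + (x $ j) \<cdot>\<^sub>v unit_vec n j"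
    by (intro eq_vecI) (auto simp: unit_vec_def less_Suc_eq)
  then have "f (vec n (\<lambda>i. if i < Suc j then x $ i else 0))
      \<le> f (vec n (\<lambda>i. if i < j then x $ i else 0)) + f ((x $ j) \<cdot>\<^sub>v unit_vec n j)"
    by (simp add: subadditive)
  then show ?case
    using Suc smult_unit_vec_le[of j "x $ j"] by simp
qed

lemma le_norm1:
  obtains C where "0 \<le> C" "\<And>x. x \<in> carrier_vec n \<Longrightarrow> f x \<le> C * norm1_vec (map_vec real_of_int x)"
proof -
  define c where "c i = f (unit_vec n i) + f (- unit_vec n i)" for i
  define C where "C = (\<Sum>i<n. c i)"
  have c: "0 \<le> c i" if "i < n" for i
    unfolding c_def using nonneg that by (simp add: add_nonneg_nonneg)
  show thesis
  proof
    show "0 \<le> C"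
      unfolding C_def using c by (intro sum_nonneg) auto
    fix x :: "int vec" assume x: "x \<in> carrier_vec n"
    have "x = vec n (\<lambda>i. if i < n then x $ i else 0)"
      using x by (intro eq_vecI) auto
    then have "f x \<le> (\<Sum>i<n. \<bar>real_of_int (x $ i)\<bar> * c i)"
      using truncation_le[OF x order.refl] by (simp add: c_def)
    also have "\<dots> \<le> (\<Sum>i<n. \<bar>real_of_int (x $ i)\<bar> * C)"
      unfolding C_def using c by (intro sum_mono mult_left_mono member_le_sum) auto
    also have "\<dots> = C * norm1_vec (map_vec real_of_int x)"
      using x by (simp add: norm1_vec_def sum_distrib_left mult.commute)
    finally show "f x \<le> C * norm1_vec (map_vec real_of_int x)" .
  qed
qed

lemma invariant_le_near_multiple:
  assumes C: "0 \<le> C" "\<And>x. x \<in> carrier_vec n \<Longrightarrow> f x \<le> C * norm1_vec (map_vec real_of_int x)"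
    and M: "M \<in> carrier_mat n n" and inv: "\<And>w. w \<in> carrier_vec n \<Longrightarrow> f (M *\<^sub>v w) = f w"
    and w: "w \<in> carrier_vec n" and t: "t \<in> carrier_vec n" and e: "e \<in> carrier_vec n"
    and e_le: "\<And>i. i < n \<Longrightarrow> \<bar>e $ i\<bar> \<le> 1"
    and near: "map_vec real_of_int w = real N \<cdot>\<^sub>v t + e"
  shows "f w \<le> C * (real N * norm1_vec (map_mat real_of_int M *\<^sub>v t)
    + norm1_mat (map_mat real_of_int M))"
proof -
  have "f w = f (M *\<^sub>v w)"
    using inv w by simp
  also have "\<dots> \<le> C * norm1_vec (map_vec real_of_int (M *\<^sub>v w))"
    using C(2) M w by simp
  also have "map_vec real_of_int (M *\<^sub>v w) = map_mat real_of_int M *\<^sub>v (real N \<cdot>\<^sub>v t + e)"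
    by (subst of_int_hom.mult_mat_vec_hom[OF M w]) (simp only: near)
  also have "C * norm1_vec \<dots> \<le> C * (real N * norm1_vec (map_mat real_of_int M *\<^sub>v t)
      + norm1_mat (map_mat real_of_int M))"
    using norm1_mult_mat_vec_perturbed[of "map_mat real_of_int M" n n t e "real N"] M t e e_le C(1)
    by (intro mult_left_mono) auto
  finally show ?thesis .
qed

lemma scaled_le_split_bound:
  assumes C: "0 \<le> C" "\<And>x. x \<in> carrier_vec n \<Longrightarrow> f x \<le> C * norm1_vec (map_vec real_of_int x)"
    and M1: "M1 \<in> carrier_mat n n" and inv1: "\<And>w. w \<in> carrier_vec n \<Longrightarrow> f (M1 *\<^sub>v w) = f w"
    and M2: "M2 \<in> carrier_mat n n" and inv2: "\<And>w. w \<in> carrier_vec n \<Longrightarrow> f (M2 *\<^sub>v w) = f w"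
    and v: "v \<in> carrier_vec n" and s: "s \<in> carrier_vec n" and u: "u \<in> carrier_vec n"
    and su: "s + u = map_vec real_of_int v"
  shows "real N * f v \<le> C * (real N * (norm1_vec (map_mat real_of_int M1 *\<^sub>v s)
      + norm1_vec (map_mat real_of_int M2 *\<^sub>v u))
      + norm1_mat (map_mat real_of_int M1) + norm1_mat (map_mat real_of_int M2))"
proof -
  define w1 where "w1 = vec n (\<lambda>i. \<lfloor>real N * s $ i\<rfloor>)"
  define w2 where "w2 = of_nat N \<cdot>\<^sub>v v - w1"
  define e where "e = map_vec real_of_int w1 - real N \<cdot>\<^sub>v s"
  have w1: "w1 \<in> carrier_vec n" and w2: "w2 \<in> carrier_vec n" and e: "e \<in> carrier_vec n"
    unfolding w1_def w2_def e_def using v s by auto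
  have e_le: "\<bar>e $ i\<bar> \<le> 1" "\<bar>(- e) $ i\<bar> \<le> 1" if "i < n" for i
    unfolding e_def w1_def using that s by auto linarith+
  have near1: "map_vec real_of_int w1 = real N \<cdot>\<^sub>v s + e"
    unfolding e_def using w1 s by (intro eq_vecI) auto
  \<comment> \<open>Since \<open>s + u\<close> is integral, the rounding error of \<open>N u\<close> is the negative of that of \<open>N s\<close>.\<close>
  have "real_of_int (v $ i) = s $ i + u $ i" if "i < n" for i
    using arg_cong[OF su, of "\<lambda>y. y $ i"] s u v that by simp
  then have near2: "map_vec real_of_int w2 = real N \<cdot>\<^sub>v u + (- e)"
    unfolding w2_def e_def w1_def using s u v by (intro eq_vecI) (auto simp: algebra_simps)
  have "w1 + w2 = of_nat N \<cdot>\<^sub>v v"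
    unfolding w2_def using w1 v by (intro eq_vecI) auto
  then have "real N * f v = f (w1 + w2)"
    using scale[OF v] by simp
  also have "\<dots> \<le> f w1 + f w2"
    using subadditive[OF w1 w2] .
  also have "\<dots> \<le> C * (real N * norm1_vec (map_mat real_of_int M1 *\<^sub>v s)
        + norm1_mat (map_mat real_of_int M1))
      + C * (real N * norm1_vec (map_mat real_of_int M2 *\<^sub>v u)
        + norm1_mat (map_mat real_of_int M2))"
    using invariant_le_near_multiple[OF C M1 inv1 w1 s e e_le(1) near1]
      invariant_le_near_multiple[OF C M2 inv2 w2 u _ e_le(2) near2] e
    by (intro add_mono) auto
  finally show ?thesis
    by (simp add: algebra_simps)
qed

lemma vanishes_if_split_contracting:
  assumes A: "A \<in> carrier_mat n n" and inv_A: "\<And>w. w \<in> carrier_vec n \<Longrightarrow> f (A *\<^sub>v w) = f w"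
    and B: "B \<in> carrier_mat n n" and inv_B: "\<And>w. w \<in> carrier_vec n \<Longrightarrow> f (B *\<^sub>v w) = f w"
    and v: "v \<in> carrier_vec n" and s: "s \<in> carrier_vec n" and u: "u \<in> carrier_vec n"
    and su: "s + u = map_vec real_of_int v"
    and lim_s: "(\<lambda>k. norm1_vec (map_mat real_of_int (A ^\<^sub>m k) *\<^sub>v s)) \<longlonglongrightarrow> 0"
    and lim_u: "(\<lambda>k. norm1_vec (map_mat real_of_int (B ^\<^sub>m k) *\<^sub>v u)) \<longlonglongrightarrow> 0"
  shows "f v = 0"
proof -
  obtain C where C: "0 \<le> C" "\<And>x. x \<in> carrier_vec n \<Longrightarrow> f x \<le> C * norm1_vec (map_vec real_of_int x)"
    using le_norm1 by blast
  define a where "a k = norm1_vec (map_mat real_of_int (A ^\<^sub>m k) *\<^sub>v s)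
    + norm1_vec (map_mat real_of_int (B ^\<^sub>m k) *\<^sub>v u)" for k
  have "f v \<le> C * a k" for k
  proof (rule le_if_nat_mult_le_add)
    fix N
    show "real N * f v \<le> real N * (C * a k)
      + C * (norm1_mat (map_mat real_of_int (A ^\<^sub>m k)) + norm1_mat (map_mat real_of_int (B ^\<^sub>m k)))"
      using scaled_le_split_bound[OF C pow_carrier_mat[OF A, of k]
          mat_pow_invariant[where g = f and k = k, OF A inv_A] pow_carrier_mat[OF B, of k]
          mat_pow_invariant[where g = f and k = k, OF B inv_B] v s u su, of N]
      by (simp add: a_def algebra_simps)
  qed
  moreover have "(\<lambda>k. C * a k) \<longlonglongrightarrow> 0"
    unfolding a_def by (intro tendsto_mult_right_zero tendsto_add_zero lim_s lim_u)
  ultimately have "f v \<le> 0"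
    by (intro LIMSEQ_le_const) auto
  then show ?thesis
    using nonneg[OF v] by simp
qed

end

lemma sdp_group_carrier [simp]: "carrier (sdp_group n A) = carrier_vec n \<times> UNIV"
  by (simp add: sdp_group_def)

lemma sdp_group_one [simp]: "\<one>\<^bsub>sdp_group n A\<^esub> = (0\<^sub>v n, 0)"
  by (simp add: sdp_group_def)

lemma sdp_group_mult [simp]:
  "(v, k) \<otimes>\<^bsub>sdp_group n A\<^esub> (w, m) = (v + mat_int_pow A k *\<^sub>v w, k + m)"
  by (simp add: sdp_group_def)

lemma inv_mat_int:
  assumes A: "A \<in> carrier_mat n n" and inv: "invertible_mat A"
  shows "inv_mat_int A \<in> carrier_mat n n" "A * inv_mat_int A = 1\<^sub>m n" "inv_mat_int A * A = 1\<^sub>m n"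
proof -
  from inv obtain B where B: "inverts_mat A B" "inverts_mat B A"
    unfolding invertible_mat_def by blast
  have dim_A: "dim_row A = n" "dim_col A = n"
    using A by auto
  have "dim_col B = n"
    using B(1) dim_A unfolding inverts_mat_def by (metis index_mult_mat(3) index_one_mat(3))
  moreover have "dim_row B = n"
    using B(2) dim_A unfolding inverts_mat_def by (metis index_mult_mat(3) index_one_mat(3))
  ultimately have "B \<in> carrier_mat (dim_row A) (dim_row A) \<and> inverts_mat A B \<and> inverts_mat B A"
    using B dim_A by auto
  then have "inv_mat_int A \<in> carrier_mat (dim_row A) (dim_row A)
      \<and> inverts_mat A (inv_mat_int A) \<and> inverts_mat (inv_mat_int A) A"
    unfolding inv_mat_int_def by (rule someI)
  then show "inv_mat_int A \<in> carrier_mat n n" "A * inv_mat_int A = 1\<^sub>m n" "inv_mat_int A * A = 1\<^sub>m n"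
    using dim_A unfolding inverts_mat_def by auto
qed

lemma sdp_group_translation_mult:
  assumes "A \<in> carrier_mat n n" and "w \<in> carrier_vec n"
  shows "(v, 0) \<otimes>\<^bsub>sdp_group n A\<^esub> (w, 0) = (v + w, 0)"
  using assms by (simp add: mat_int_pow_def)

lemma sdp_group_translation_pow:
  assumes A: "A \<in> carrier_mat n n" and w: "w \<in> carrier_vec n"
  shows "(w, 0) [^]\<^bsub>sdp_group n A\<^esub> (N::nat) = (of_nat N \<cdot>\<^sub>v w, 0)"
proof (induction N)
  case 0
  show ?case using w by (auto intro!: eq_vecI)
next
  case (Suc N)
  then have "(w, 0) [^]\<^bsub>sdp_group n A\<^esub> Suc N = (of_nat N \<cdot>\<^sub>v w + w, 0)"
    using sdp_group_translation_mult[OF A w] by simp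
  also have "of_nat N \<cdot>\<^sub>v w + w = of_nat (Suc N) \<cdot>\<^sub>v w"
    using w by (intro eq_vecI) (auto simp: algebra_simps)
  finally show ?case .
qed

lemma sdp_group_inv_generator:
  assumes A: "A \<in> carrier_mat n n" and inv: "invertible_mat A"
  shows "inv\<^bsub>sdp_group n A\<^esub> (0\<^sub>v n, 1) = (0\<^sub>v n, -1)"
  unfolding m_inv_def
proof (rule the_equality)
  define B where "B = inv_mat_int A"
  have B: "B \<in> carrier_mat n n" "B * A = 1\<^sub>m n"
    using inv_mat_int[OF A inv] unfolding B_def by auto
  have "mat_int_pow A (-1) = 1\<^sub>m n * B" and "mat_int_pow A 1 = A"
    using A B by (auto simp: mat_int_pow_def B_def)
  then show "(0\<^sub>v n, -1) \<in> carrier (sdp_group n A)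
      \<and> (0\<^sub>v n, 1) \<otimes>\<^bsub>sdp_group n A\<^esub> (0\<^sub>v n, -1) = \<one>\<^bsub>sdp_group n A\<^esub>
      \<and> (0\<^sub>v n, -1) \<otimes>\<^bsub>sdp_group n A\<^esub> (0\<^sub>v n, 1) = \<one>\<^bsub>sdp_group n A\<^esub>"
    using A B by simp
  fix y assume y: "y \<in> carrier (sdp_group n A)
      \<and> (0\<^sub>v n, 1) \<otimes>\<^bsub>sdp_group n A\<^esub> y = \<one>\<^bsub>sdp_group n A\<^esub>
      \<and> y \<otimes>\<^bsub>sdp_group n A\<^esub> (0\<^sub>v n, 1) = \<one>\<^bsub>sdp_group n A\<^esub>"
  obtain u j where y_eq: "y = (u, j)" by (cases y)
  have u: "u \<in> carrier_vec n"
    using y y_eq by simp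
  have "0\<^sub>v n + A *\<^sub>v u = 0\<^sub>v n" and j: "j = -1"
    using y \<open>mat_int_pow A 1 = A\<close> unfolding y_eq by simp_all
  then have Au: "A *\<^sub>v u = 0\<^sub>v n"
    using A u by simp
  have "u = B *\<^sub>v (A *\<^sub>v u)"
    using A B u by (simp flip: assoc_mult_mat_vec)
  then show "y = (0\<^sub>v n, -1)"
    using Au B y_eq j by simp
qed

lemma length_function_translation_homogeneous_subadditive:
  assumes A: "A \<in> carrier_mat n n" and l: "length_function (sdp_group n A) l"
  shows "homogeneous_subadditive n (\<lambda>w. l (w, 0))"
proof
  note l = l[unfolded length_function_def]
  have commuting_subadditive: "l (a \<otimes>\<^bsub>sdp_group n A\<^esub> b) \<le> l a + l b"
    if "a \<in> carrier (sdp_group n A)" "b \<in> carrier (sdp_group n A)"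
      "a \<otimes>\<^bsub>sdp_group n A\<^esub> b = b \<otimes>\<^bsub>sdp_group n A\<^esub> a" for a b
    using l that by blast
  show "0 \<le> l (w, 0)" if "w \<in> carrier_vec n" for w
    using l that by simp
  show "l (of_nat N \<cdot>\<^sub>v w, 0) = real N * l (w, 0)" if w: "w \<in> carrier_vec n" for w N
  proof -
    have "l ((w, 0) [^]\<^bsub>sdp_group n A\<^esub> (int N)) = \<bar>real_of_int (int N)\<bar> * l (w, 0)"
      using l w by simp
    then show ?thesis
      by (simp add: int_pow_int sdp_group_translation_pow[OF A w])
  qed
  show "l (v + w, 0) \<le> l (v, 0) + l (w, 0)"
    if v: "v \<in> carrier_vec n" and w: "w \<in> carrier_vec n" for v w
  proof -
    have commute: "(v, 0) \<otimes>\<^bsub>sdp_group n A\<^esub> (w, 0) = (w, 0) \<otimes>\<^bsub>sdp_group n A\<^esub> (v, 0)"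
      unfolding sdp_group_translation_mult[OF A v] sdp_group_translation_mult[OF A w]
      using comm_add_vec[OF v w] by simp
    have "l ((v, 0) \<otimes>\<^bsub>sdp_group n A\<^esub> (w, 0)) \<le> l (v, 0) + l (w, 0)"
      using commuting_subadditive[OF _ _ commute] v w by simp
    then show ?thesis
      by (simp only: sdp_group_translation_mult[OF A w])
  qed
qed

lemma length_function_translation_invariant:
  assumes A: "A \<in> carrier_mat n n" and inv: "invertible_mat A"
    and l: "length_function (sdp_group n A) l" and w: "w \<in> carrier_vec n"
  shows "l (A *\<^sub>v w, 0) = l (w, 0)"
proof -
  have conjugation_invariant: "\<forall>g\<in>carrier (sdp_group n A). \<forall>h\<in>carrier (sdp_group n A).
      l (h \<otimes>\<^bsub>sdp_group n A\<^esub> g \<otimes>\<^bsub>sdp_group n A\<^esub> inv\<^bsub>sdp_group n A\<^esub> h) = l g"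
    using l unfolding length_function_def by blast
  have "(0\<^sub>v n, 1) \<otimes>\<^bsub>sdp_group n A\<^esub> (w, 0) \<otimes>\<^bsub>sdp_group n A\<^esub> inv\<^bsub>sdp_group n A\<^esub> (0\<^sub>v n, 1)
      = (A *\<^sub>v w, 0)"
    using A w by (simp add: sdp_group_inv_generator[OF A inv] mat_int_pow_def)
  then show ?thesis
    using conjugation_invariant[rule_format, of "(w, 0)" "(0\<^sub>v n, 1)"] w by simp
qed

theorem lemma8:
  fixes n :: nat and A :: "int mat" and l :: "int vec \<times> int \<Rightarrow> real"
  assumes "A \<in> carrier_mat n n"
    and "invertible_mat A"
    and "\<exists>D. diagonal_mat D \<and> similar_mat (map_mat complex_of_int A) D"
    and "\<And>z. eigenvalue (map_mat complex_of_int A) z \<Longrightarrow> cmod z \<noteq> 1"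
    and "length_function (sdp_group n A) l"
  shows "\<forall>v\<in>carrier_vec n. l (v, 0) = 0"
proof
  fix v :: "int vec" assume v: "v \<in> carrier_vec n"
  define B where "B = inv_mat_int A"
  have B: "B \<in> carrier_mat n n" and AB: "A * B = 1\<^sub>m n" and BA: "B * A = 1\<^sub>m n"
    using inv_mat_int[OF assms(1,2)] unfolding B_def by auto
  have translation_length: "homogeneous_subadditive n (\<lambda>w. l (w, 0))"
    by (rule length_function_translation_homogeneous_subadditive[OF assms(1,5)])
  have inv_A: "\<And>w. w \<in> carrier_vec n \<Longrightarrow> l (A *\<^sub>v w, 0) = l (w, 0)"
    by (rule length_function_translation_invariant[OF assms(1,2,5)])
  have inv_B: "\<And>w. w \<in> carrier_vec n \<Longrightarrow> l (B *\<^sub>v w, 0) = l (w, 0)"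
    by (rule inverse_invariant[where g = "\<lambda>w. l (w, 0)", OF assms(1) B AB inv_A])
  obtain D where D: "diagonal_mat D" "similar_mat (map_mat complex_of_int A) D"
    using assms(3) by blast
  have v': "map_vec real_of_int v \<in> carrier_vec n"
    using v by simp
  obtain s u where split: "s \<in> carrier_vec n" "u \<in> carrier_vec n" "s + u = map_vec real_of_int v"
    "(\<lambda>k. norm1_vec (map_mat real_of_int (A ^\<^sub>m k) *\<^sub>v s)) \<longlonglongrightarrow> 0"
    "(\<lambda>k. norm1_vec (map_mat real_of_int (B ^\<^sub>m k) *\<^sub>v u)) \<longlonglongrightarrow> 0"
    by (rule int_mat_split_contracting[OF assms(1) B BA D assms(4) v'])
  show "l (v, 0) = 0"
    by (rule homogeneous_subadditive.vanishes_if_split_contracting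
        [OF translation_length assms(1) inv_A B inv_B v split])
qed

end
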